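(* For generic $a$ ($a\neq1$) and $k$, define for $n\ge0$ \[ \boldsymbol{\alpha}_n(a,k,q)=\frac{(-1)^na^nq^{n(3n-1)/2}(1-aq^{2n})(a;q)_n}{(1-a)(q;q)_n},\qquad \boldsymbol{\beta}_n(a,k,q)=(k;q)_n\sum_{j=0}^n\frac{(-1)^jk^jq^{\binom j2+nj}(k/a;q)_{n-j}}{(q;q)_j(q;q)_{n-j}}. \] Then $(\boldsymbol{\alpha}_n,\boldsymbol{\beta}_n)$ is a WP-Bailey pair relative to $a$ with parameter $k$.
   Context: Notation: $(x;q)_n=\prod_{i=0}^{n-1}(1-xq^i)$. A pair of sequences $(\boldsymbol{\alpha}_n(a,k,q),\boldsymbol{\beta}_n(a,k,q))_{n\ge0}$ is a WP-Bailey pair (relative to $a$, with parameter $k$) if $\boldsymbol{\alpha}_0=1$ and for all $n\ge0$ \[\boldsymbol{\beta}_n=\sum_{j=0}^n\frac{(k/a;q)_{n-j}(k;q)_{n+j}}{(q;q)_{n-j}(aq;q)_{n+j}}\boldsymbol{\alpha}_j.\] *)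

theory Defs
  imports Complex_Main
begin

definition qpoch :: "complex \<Rightarrow> complex \<Rightarrow> nat \<Rightarrow> complex" where
  "qpoch x q n = (\<Prod>i<n. 1 - x * q ^ i)"

definition WP_Bailey_pair ::
  "complex \<Rightarrow> complex \<Rightarrow> complex \<Rightarrow> (nat \<Rightarrow> complex) \<Rightarrow> (nat \<Rightarrow> complex) \<Rightarrow> bool" where
  "WP_Bailey_pair a k q \<alpha> \<beta> \<longleftrightarrow>
     \<alpha> 0 = 1 \<and>
     (\<forall>n. \<beta> n = (\<Sum>j\<le>n. qpoch (k / a) q (n - j) * qpoch k q (n + j)
                        / (qpoch q q (n - j) * qpoch (a * q) q (n + j)) * \<alpha> j))"

definition alpha17 :: "complex \<Rightarrow> complex \<Rightarrow> complex \<Rightarrow> nat \<Rightarrow> complex" where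
  "alpha17 a k q n =
     (-1) ^ n * a ^ n * q ^ (n * (3 * n - 1) div 2) * (1 - a * q ^ (2 * n)) * qpoch a q n
       / ((1 - a) * qpoch q q n)"

definition beta17 :: "complex \<Rightarrow> complex \<Rightarrow> complex \<Rightarrow> nat \<Rightarrow> complex" where
  "beta17 a k q n =
     qpoch k q n * (\<Sum>j\<le>n. (-1) ^ j * k ^ j * q ^ ((j choose 2) + n * j) * qpoch (k / a) q (n - j)
                            / (qpoch q q j * qpoch q q (n - j)))"

end

theory Submission
  imports Defs "HOL-Computational_Algebra.Polynomial"
begin

text \<open>
  Regard both sides of the WP-Bailey relation as functions of \<open>k\<close>: the transform
  \<open>W n k = (\<Sum>j\<le>n. K n j k * \<alpha> j)\<close> and \<open>\<beta> n k\<close>. Both satisfy the recurrence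
  \<open>(1 - k) F n (k q) = (1 - k q^(2n)) F n k + (1 - k) (k/a) F (n - 1) (k q)\<close>:
  for \<open>W\<close> it holds termwise for the kernel \<open>K\<close>, for \<open>\<beta>\<close> because the summands of the
  corresponding combination telescope. Hence, by induction on \<open>n\<close>, the difference
  \<open>D = W n - \<beta> n\<close> solves \<open>(1 - k) D (k q) = (1 - k q^(2n)) D k\<close>. At \<open>k = a\<close> only the
  top terms survive, as \<open>(a/a; q)\<^sub>n\<^sub>-\<^sub>j = 0\<close> for \<open>j < n\<close>, and they agree; the recurrence
  carries this zero to every \<open>a q^i\<close>, so the polynomial \<open>D\<close> has infinitely many roots.
\<close>

lemma qpoch_0 [simp]: "qpoch x q 0 = 1"
  by (simp add: qpoch_def)

lemma qpoch_Suc: "qpoch x q (Suc n) = qpoch x q n * (1 - x * q ^ n)"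
  by (simp add: qpoch_def)

lemma qpoch_Suc_shift: "qpoch x q (Suc n) = (1 - x) * qpoch (x * q) q n"
  unfolding qpoch_def prod.lessThan_Suc_shift by (simp add: mult.assoc)

lemma qpoch_1_eq_0: "0 < n \<Longrightarrow> qpoch 1 q n = 0"
  by (cases n) (simp_all add: qpoch_Suc_shift)

lemma qpoch_Suc_shift': "(1 - x) * qpoch (x * q) q n = qpoch x q n * (1 - x * q ^ n)"
  by (simp add: qpoch_Suc_shift[symmetric] qpoch_Suc)

lemma power_Suc_ne_1_if_qpoch_nonzero:
  assumes "\<And>m. qpoch q q m \<noteq> 0"
  shows "q ^ Suc d \<noteq> 1"
  using assms[of "Suc (Suc d)"] by (auto simp: qpoch_Suc)

lemma mult_power_ne_1_if_qpoch_nonzero: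
  assumes "\<And>m. qpoch (a * q) q m \<noteq> 0" and "a \<noteq> 1"
  shows "a * q ^ i \<noteq> 1"
proof (cases i)
  case (Suc i')
  then show ?thesis
    using assms(1)[of "Suc i"] by (auto simp: qpoch_Suc mult.assoc)
qed (use assms(2) in simp)

definition poly_function :: "('a::comm_semiring_0 \<Rightarrow> 'a) \<Rightarrow> bool" where
  "poly_function f \<longleftrightarrow> (\<exists>p. f = poly p)"

lemma poly_functionE:
  assumes "poly_function f"
  obtains p where "\<And>x. f x = poly p x"
  using assms unfolding poly_function_def by auto

lemma poly_functionI: "(\<And>x. f x = poly p x) \<Longrightarrow> poly_function f"
  unfolding poly_function_def by auto

lemma poly_function_const: "poly_function (\<lambda>x. c)"
  by (rule poly_functionI[of _ "[:c:]"]) simp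

lemma poly_function_id: "poly_function (\<lambda>x::'a::comm_semiring_1. x)"
  by (rule poly_functionI[of _ "[:0, 1:]"]) simp

lemma poly_function_add:
  assumes "poly_function f" and "poly_function g"
  shows "poly_function (\<lambda>x. f x + g x)"
proof -
  obtain p r where "\<And>x. f x = poly p x" "\<And>x. g x = poly r x"
    using assms by (metis poly_functionE)
  then show ?thesis
    by (intro poly_functionI[of _ "p + r"]) simp
qed

lemma poly_function_diff:
  fixes f g :: "'a::comm_ring \<Rightarrow> 'a"
  assumes "poly_function f" and "poly_function g"
  shows "poly_function (\<lambda>x. f x - g x)"
proof -
  obtain p r where "\<And>x. f x = poly p x" "\<And>x. g x = poly r x"
    using assms by (metis poly_functionE)
  then show ?thesis
    by (intro poly_functionI[of _ "p - r"]) simp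
qed

lemma poly_function_mult:
  assumes "poly_function f" and "poly_function g"
  shows "poly_function (\<lambda>x. f x * g x)"
proof -
  obtain p r where "\<And>x. f x = poly p x" "\<And>x. g x = poly r x"
    using assms by (metis poly_functionE)
  then show ?thesis
    by (intro poly_functionI[of _ "p * r"]) simp
qed

lemma poly_function_sum:
  "(\<And>i. i \<in> A \<Longrightarrow> poly_function (\<lambda>x. f x i)) \<Longrightarrow> poly_function (\<lambda>x. \<Sum>i\<in>A. f x i)"
  by (induction A rule: infinite_finite_induct) (simp_all add: poly_function_const poly_function_add)

lemma poly_function_prod:
  fixes f :: "'a::comm_semiring_1 \<Rightarrow> 'b \<Rightarrow> 'a"
  shows "(\<And>i. i \<in> A \<Longrightarrow> poly_function (\<lambda>x. f x i)) \<Longrightarrow> poly_function (\<lambda>x. \<Prod>i\<in>A. f x i)"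
  by (induction A rule: infinite_finite_induct) (simp_all add: poly_function_const poly_function_mult)

lemma poly_function_power:
  fixes f :: "'a::comm_semiring_1 \<Rightarrow> 'a"
  shows "poly_function f \<Longrightarrow> poly_function (\<lambda>x. f x ^ n)"
  by (induction n) (simp_all add: poly_function_const poly_function_mult)

lemma poly_function_qpoch_scaled: "poly_function (\<lambda>x. qpoch (x * c) q n)"
  unfolding qpoch_def
  by (intro poly_function_prod poly_function_diff poly_function_mult poly_function_const poly_function_id)

lemma poly_function_divide:
  fixes f :: "'a::field \<Rightarrow> 'a"
  shows "poly_function f \<Longrightarrow> poly_function (\<lambda>x. f x / c)"
  unfolding divide_inverse by (intro poly_function_mult poly_function_const)

lemma poly_function_qpoch: "poly_function (\<lambda>x. qpoch x q n)"
  using poly_function_qpoch_scaled[of 1] by simp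

lemma poly_function_qpoch_divide: "poly_function (\<lambda>x. qpoch (x / c) q n)"
  using poly_function_qpoch_scaled[of "inverse c"] by (simp add: divide_inverse)

lemma poly_function_zero_if_infinite_zeros:
  fixes f :: "'a::idom \<Rightarrow> 'a"
  assumes "poly_function f" and "infinite {x. f x = 0}"
  shows "f x = 0"
proof -
  obtain p where p: "\<And>x. f x = poly p x"
    using assms(1) poly_functionE by blast
  with assms(2) have "p = 0"
    using poly_roots_finite by fastforce
  then show ?thesis
    by (simp add: p)
qed

lemma q_difference_solution_zero:
  fixes D :: "'a::idom \<Rightarrow> 'a"
  assumes poly: "poly_function D"
    and eq: "\<And>x. (1 - x) * D (x * q) = (1 - x * q ^ N) * D x" and "N > 0"
    and "D a = 0" and "a \<noteq> 0"
    and a_q: "\<And>i. a * q ^ i \<noteq> 1" and q: "\<And>d. q ^ Suc d \<noteq> 1"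
  shows "D x = 0"
proof (cases "q = 0")
  case True
  have D0: "(1 - x) * D 0 = D x" for x
    using eq[of x] True \<open>N > 0\<close> by simp
  have "D 0 = 0"
    using D0[of a] a_q[of 0] \<open>D a = 0\<close> by simp
  then show ?thesis
    using D0[of x] by simp
next
  case False
  have zeros: "D (a * q ^ i) = 0" for i
  proof (induction i)
    case (Suc i)
    from eq[of "a * q ^ i"] Suc.IH have "(1 - a * q ^ i) * D (a * q ^ Suc i) = 0"
      by (simp add: mult.assoc mult.commute[of q])
    then show ?case
      using a_q[of i] by simp
  qed (simp add: \<open>D a = 0\<close>)
  have "inj (\<lambda>i. a * q ^ i)"
  proof (rule injI)
    have "a * q ^ i \<noteq> a * q ^ j" if "i < j" for i j
    proof
      obtain d where j: "j = i + Suc d"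
        using \<open>i < j\<close> less_iff_Suc_add by auto
      assume "a * q ^ i = a * q ^ j"
      then have "q ^ i * 1 = q ^ i * q ^ Suc d"
        using \<open>a \<noteq> 0\<close> unfolding j power_add by simp
      with False q[of d] show False
        by simp
    qed
    then show "a * q ^ i = a * q ^ j \<Longrightarrow> i = j" for i j
      by (metis linorder_neqE_nat)
  qed
  then have "infinite (range (\<lambda>i. a * q ^ i))"
    by (simp add: finite_image_iff)
  moreover have "range (\<lambda>i. a * q ^ i) \<subseteq> {x. D x = 0}"
    using zeros by auto
  ultimately show ?thesis
    using poly_function_zero_if_infinite_zeros[OF poly] finite_subset by blast
qed

lemma k_shift_recurrence_unique:
  fixes F G :: "nat \<Rightarrow> 'a::field \<Rightarrow> 'a"
  assumes poly: "\<And>n. poly_function (F n)" "\<And>n. poly_function (G n)"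
    and F_shift: "\<And>m k. (1 - k) * F (Suc m) (k * q)
      = (1 - k * q ^ (2 * Suc m)) * F (Suc m) k + (1 - k) * (k / a) * F m (k * q)"
    and G_shift: "\<And>m k. (1 - k) * G (Suc m) (k * q)
      = (1 - k * q ^ (2 * Suc m)) * G (Suc m) k + (1 - k) * (k / a) * G m (k * q)"
    and "\<And>k. F 0 k = G 0 k" and "\<And>n. F n a = G n a"
    and "a \<noteq> 0" and "\<And>i. a * q ^ i \<noteq> 1" and "\<And>d. q ^ Suc d \<noteq> 1"
  shows "F n k = G n k"
proof (induction n arbitrary: k)
  case (Suc m)
  have "F (Suc m) k - G (Suc m) k = 0"
  proof (rule q_difference_solution_zero[where D = "\<lambda>k. F (Suc m) k - G (Suc m) k" and N = "2 * Suc m"])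
    show "poly_function (\<lambda>k. F (Suc m) k - G (Suc m) k)"
      using poly by (intro poly_function_diff) auto
    show "(1 - x) * (F (Suc m) (x * q) - G (Suc m) (x * q))
        = (1 - x * q ^ (2 * Suc m)) * (F (Suc m) x - G (Suc m) x)" for x
      unfolding right_diff_distrib F_shift G_shift Suc.IH by (simp add: algebra_simps)
  qed (use assms in auto)
  then show ?case
    by simp
qed (use assms in auto)

definition wp_coeff :: "complex \<Rightarrow> complex \<Rightarrow> nat \<Rightarrow> nat \<Rightarrow> complex \<Rightarrow> complex" where
  "wp_coeff a q n j k =
     qpoch (k / a) q (n - j) * qpoch k q (n + j) / (qpoch q q (n - j) * qpoch (a * q) q (n + j))"

definition wp_transform :: "complex \<Rightarrow> complex \<Rightarrow> (nat \<Rightarrow> complex) \<Rightarrow> nat \<Rightarrow> complex \<Rightarrow> complex" where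
  "wp_transform a q \<alpha> n k = (\<Sum>j\<le>n. wp_coeff a q n j k * \<alpha> j)"

lemma WP_Bailey_pair_iff_wp_transform:
  "WP_Bailey_pair a k q \<alpha> \<beta> \<longleftrightarrow> \<alpha> 0 = 1 \<and> (\<forall>n. \<beta> n = wp_transform a q \<alpha> n k)"
  unfolding WP_Bailey_pair_def wp_transform_def wp_coeff_def ..

lemma wp_coeff_k_shift:
  assumes nq: "\<And>m. qpoch q q m \<noteq> 0" and naq: "\<And>m. qpoch (a * q) q m \<noteq> 0"
    and "a \<noteq> 0" and "j \<le> m"
  shows "(1 - k) * wp_coeff a q (Suc m) j (k * q)
    = (1 - k * q ^ (2 * Suc m)) * wp_coeff a q (Suc m) j k + (1 - k) * (k / a) * wp_coeff a q m j (k * q)"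
proof -
  obtain d where m: "m = j + d"
    using \<open>j \<le> m\<close> le_iff_add by blast
  define x y where "x = q ^ d" and "y = q ^ (m + j)"
  define A B Q1 Q2 where "A = qpoch (k * q / a) q d" and "B = qpoch (k * q) q (m + j)"
    and "Q1 = qpoch q q d" and "Q2 = qpoch (a * q) q (m + j)"
  have nz: "Q1 \<noteq> 0" "Q2 \<noteq> 0" "1 - q * x \<noteq> 0" "1 - a * q * y \<noteq> 0"
    using nq[of d] naq[of "m + j"] nq[of "Suc d"] naq[of "Suc (m + j)"]
    by (auto simp: Q1_def Q2_def x_def y_def qpoch_Suc)
  have idx: "Suc m - j = Suc d" "Suc m + j = Suc (m + j)" "m - j = d"
    using m by auto
  have shift: "qpoch (k / a) q (Suc d) = (1 - k / a) * A" "qpoch k q (Suc (m + j)) = (1 - k) * B"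
    by (simp_all add: A_def B_def qpoch_Suc_shift)
  have step: "qpoch (k * q / a) q (Suc d) = A * (1 - k * q / a * x)"
    "qpoch (k * q) q (Suc (m + j)) = B * (1 - k * q * y)"
    "qpoch q q (Suc d) = Q1 * (1 - q * x)" "qpoch (a * q) q (Suc (m + j)) = Q2 * (1 - a * q * y)"
    by (simp_all add: A_def B_def Q1_def Q2_def x_def y_def qpoch_Suc)
  define D where "D = a * Q1 * (1 - q * x) * Q2 * (1 - a * q * y)"
  have c1: "wp_coeff a q (Suc m) j (k * q) = A * (a - k * q * x) * B * (1 - k * q * y) / D"
    unfolding wp_coeff_def idx step D_def using nz \<open>a \<noteq> 0\<close> by (simp add: field_simps)
  have c2: "wp_coeff a q (Suc m) j k = (a - k) * A * (1 - k) * B / D"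
    unfolding wp_coeff_def idx shift step D_def using nz \<open>a \<noteq> 0\<close> by (simp add: field_simps)
  have "wp_coeff a q m j (k * q) = A * B / (Q1 * Q2)"
    unfolding wp_coeff_def idx A_def B_def Q1_def Q2_def ..
  then have c3: "(1 - k) * (k / a) * wp_coeff a q m j (k * q)
      = (1 - k) * k * A * B * (1 - q * x) * (1 - a * q * y) / D"
    unfolding D_def using nz \<open>a \<noteq> 0\<close> by simp
  have "2 * Suc m = 2 + d + (m + j)"
    using m by simp
  then have q_power: "q ^ (2 * Suc m) = q\<^sup>2 * x * y"
    unfolding x_def y_def by (metis power_add)
  have numerators: "(1 - k) * (A * (a - k * q * x) * B * (1 - k * q * y))
    = (1 - k * (q\<^sup>2 * x * y)) * ((a - k) * A * (1 - k) * B) + (1 - k) * k * A * B * (1 - q * x) * (1 - a * q * y)"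
    by (simp add: algebra_simps power2_eq_square)
  show ?thesis
    unfolding c3 c1 c2 q_power by (simp only: times_divide_eq_right add_divide_distrib[symmetric] numerators)
qed

lemma wp_coeff_top_k_shift:
  assumes "\<And>m. qpoch (a * q) q m \<noteq> 0"
  shows "(1 - k) * wp_coeff a q n n (k * q) = (1 - k * q ^ (2 * n)) * wp_coeff a q n n k"
proof -
  have coeff: "wp_coeff a q n n x = qpoch x q (n + n) / qpoch (a * q) q (n + n)" for x
    by (simp add: wp_coeff_def)
  have "(1 - k) * qpoch (k * q) q (n + n) = (1 - k * q ^ (n + n)) * qpoch k q (n + n)"
    by (simp only: qpoch_Suc_shift' mult.commute)
  then show ?thesis
    by (simp only: coeff mult_2 times_divide_eq_right)
qed

lemma wp_transform_k_shift:
  assumes nq: "\<And>m. qpoch q q m \<noteq> 0" and naq: "\<And>m. qpoch (a * q) q m \<noteq> 0" and "a \<noteq> 0"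
  shows "(1 - k) * wp_transform a q \<alpha> (Suc m) (k * q)
    = (1 - k * q ^ (2 * Suc m)) * wp_transform a q \<alpha> (Suc m) k
      + (1 - k) * (k / a) * wp_transform a q \<alpha> m (k * q)"
proof -
  let ?c = "1 - k * q ^ (2 * Suc m)" and ?c' = "(1 - k) * (k / a)"
  have "(1 - k) * wp_coeff a q (Suc m) j (k * q) * \<alpha> j
      = ?c * (wp_coeff a q (Suc m) j k * \<alpha> j) + ?c' * (wp_coeff a q m j (k * q) * \<alpha> j)"
    if "j \<in> {..m}" for j
    using that by (simp only: wp_coeff_k_shift[OF nq naq \<open>a \<noteq> 0\<close>] atMost_iff distrib_right mult.assoc)
  moreover have "(1 - k) * wp_coeff a q (Suc m) (Suc m) (k * q) * \<alpha> (Suc m)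
      = ?c * (wp_coeff a q (Suc m) (Suc m) k * \<alpha> (Suc m))"
    by (simp only: wp_coeff_top_k_shift[OF naq] mult.assoc)
  ultimately show ?thesis
    by (simp add: wp_transform_def sum_distrib_left sum.distrib distrib_left mult.assoc)
qed

lemma poly_function_wp_transform: "poly_function (wp_transform a q \<alpha> n)"
  unfolding wp_transform_def wp_coeff_def
  by (intro poly_function_sum poly_function_mult poly_function_divide poly_function_qpoch
      poly_function_qpoch_divide poly_function_const)

lemma poly_function_beta17: "poly_function (\<lambda>k. beta17 a k q n)"
  unfolding beta17_def
  by (intro poly_function_sum poly_function_mult poly_function_divide poly_function_qpoch
      poly_function_qpoch_divide poly_function_const poly_function_power poly_function_id)

definition beta17_term :: "complex \<Rightarrow> complex \<Rightarrow> nat \<Rightarrow> nat \<Rightarrow> complex \<Rightarrow> complex" where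
  "beta17_term a q n j k =
     (-1) ^ j * k ^ j * q ^ ((j choose 2) + n * j) * qpoch (k / a) q (n - j)
       / (qpoch q q j * qpoch q q (n - j))"

definition beta17_telescoper :: "complex \<Rightarrow> complex \<Rightarrow> nat \<Rightarrow> nat \<Rightarrow> complex \<Rightarrow> complex" where
  "beta17_telescoper a q n j k =
     (-1) ^ j * k ^ j * q ^ ((j choose 2) + n * j) * (1 - q ^ j) * qpoch (k * q / a) q (n - j)
       / (qpoch q q j * qpoch q q (n - j))"

lemma beta17_eq_sum: "beta17 a k q n = qpoch k q n * (\<Sum>j\<le>n. beta17_term a q n j k)"
  unfolding beta17_def beta17_term_def ..

lemma qpoch_q_Suc_diff:
  assumes "j \<le> m"
  shows "qpoch q q (Suc m - j) = qpoch q q (m - j) * (1 - q ^ (Suc m - j))"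
  using assms by (simp add: Suc_diff_le qpoch_Suc)

lemma qpoch_quotient_Suc_diff:
  assumes nq: "\<And>m. qpoch q q m \<noteq> 0" and "j \<le> m"
  shows "(1 - q ^ (Suc m - j)) * (c * qpoch (x * q) q (Suc m - j) / (d * qpoch q q (Suc m - j)))
    = (1 - x * q ^ (Suc m - j)) * (c * qpoch (x * q) q (m - j) / (d * qpoch q q (m - j)))"
proof -
  have "qpoch (x * q) q (Suc m - j) = qpoch (x * q) q (m - j) * (1 - x * q ^ (Suc m - j))"
    using \<open>j \<le> m\<close> by (simp add: Suc_diff_le qpoch_Suc mult_ac)
  moreover have "1 - q ^ (Suc m - j) \<noteq> 0" "qpoch q q (m - j) \<noteq> 0"
    using nq[of "Suc m - j"] nq[of "m - j"] qpoch_q_Suc_diff[OF \<open>j \<le> m\<close>] by auto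
  ultimately show ?thesis
    by (simp add: qpoch_q_Suc_diff[OF \<open>j \<le> m\<close>])
qed

lemma beta17_term_Suc:
  assumes nq: "\<And>m. qpoch q q m \<noteq> 0" and "j \<le> m"
  shows "(1 - q ^ (Suc m - j)) * beta17_term a q (Suc m) j k = (1 - k / a) * beta17_term a q m j (k * q)"
proof -
  define E where "E = (-1) ^ j * k ^ j * q ^ ((j choose 2) + Suc m * j) / qpoch q q j"
  define R Qd u where "R = qpoch (k * q / a) q (m - j)" and "Qd = qpoch q q (m - j)"
    and "u = 1 - q ^ (Suc m - j)"
  have "u \<noteq> 0" "Qd \<noteq> 0"
    using nq[of "Suc m - j"] nq[of "m - j"] qpoch_q_Suc_diff[OF \<open>j \<le> m\<close>] by (auto simp: u_def Qd_def)
  have "qpoch (k / a) q (Suc m - j) = (1 - k / a) * R"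
    using \<open>j \<le> m\<close> by (simp add: R_def Suc_diff_le qpoch_Suc_shift)
  then have "beta17_term a q (Suc m) j k = E * ((1 - k / a) * R) / (Qd * u)"
    unfolding beta17_term_def qpoch_q_Suc_diff[OF \<open>j \<le> m\<close>] E_def Qd_def[symmetric] u_def[symmetric]
    by simp
  moreover have "beta17_term a q m j (k * q) = E * R / Qd"
  proof -
    have "q ^ ((j choose 2) + Suc m * j) = q ^ j * q ^ ((j choose 2) + m * j)"
      by (simp add: algebra_simps flip: power_add)
    then show ?thesis
      unfolding beta17_term_def E_def R_def Qd_def by (simp add: power_mult_distrib mult_ac)
  qed
  ultimately show ?thesis
    unfolding u_def[symmetric] using \<open>u \<noteq> 0\<close> \<open>Qd \<noteq> 0\<close> by simp
qed

lemma beta17_term_Suc_k_shift: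
  assumes nq: "\<And>m. qpoch q q m \<noteq> 0" and "j \<le> m"
  shows "(1 - q ^ (Suc m - j)) * beta17_term a q (Suc m) j (k * q)
    = q ^ j * (1 - k * q ^ (Suc m - j) / a) * beta17_term a q m j (k * q)"
proof -
  have "q ^ ((j choose 2) + Suc m * j) = q ^ j * q ^ ((j choose 2) + m * j)"
    by (simp add: algebra_simps flip: power_add)
  then show ?thesis
    using qpoch_quotient_Suc_diff[OF nq \<open>j \<le> m\<close>,
        of "(-1) ^ j * (k * q) ^ j * q ^ ((j choose 2) + Suc m * j)" "k / a"]
    by (simp add: beta17_term_def mult_ac)
qed

lemma beta17_telescoper_eq:
  assumes nq: "\<And>m. qpoch q q m \<noteq> 0" and "j \<le> m"
  shows "(1 - q ^ (Suc m - j)) * beta17_telescoper a q (Suc m) j k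
    = (1 - q ^ j) * (1 - k * q ^ (Suc m - j) / a) * beta17_term a q m j (k * q)"
proof -
  have "q ^ ((j choose 2) + Suc m * j) = q ^ j * q ^ ((j choose 2) + m * j)"
    by (simp add: algebra_simps flip: power_add)
  then show ?thesis
    using qpoch_quotient_Suc_diff[OF nq \<open>j \<le> m\<close>,
        of "(-1) ^ j * k ^ j * q ^ ((j choose 2) + Suc m * j) * (1 - q ^ j)" "k / a"]
    by (simp add: beta17_telescoper_def beta17_term_def power_mult_distrib mult_ac)
qed

lemma beta17_telescoper_Suc:
  assumes nq: "\<And>m. qpoch q q m \<noteq> 0" and "j \<le> m"
  shows "beta17_telescoper a q (Suc m) (Suc j) k = - (k * q ^ j * q ^ Suc m) * beta17_term a q m j (k * q)"
proof -
  have "1 - q * q ^ j \<noteq> 0"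
    using nq[of "Suc j"] by (auto simp: qpoch_Suc)
  moreover have "(Suc j choose 2) + Suc m * Suc j = j + Suc m + ((j choose 2) + m * j + j)"
    by (simp add: numeral_2_eq_2)
  moreover have "Suc m - Suc j = m - j"
    by simp
  ultimately show ?thesis
    using nq[of j] nq[of "m - j"]
    by (simp add: beta17_telescoper_def beta17_term_def qpoch_Suc power_add power_mult_distrib
        field_simps del: diff_Suc_Suc)
qed

lemma beta17_term_k_shift:
  assumes nq: "\<And>m. qpoch q q m \<noteq> 0" and "a \<noteq> 0" and "j \<le> m"
  shows "(1 - k * q ^ Suc m) * beta17_term a q (Suc m) j (k * q)
      - (1 - k * q ^ (2 * Suc m)) * beta17_term a q (Suc m) j k - (k / a) * beta17_term a q m j (k * q)
    = beta17_telescoper a q (Suc m) (Suc j) k - beta17_telescoper a q (Suc m) j k"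
    (is "?lhs = ?rhs")
proof -
  define x y T where "x = q ^ j" and "y = q ^ (Suc m - j)" and "T = beta17_term a q m j (k * q)"
  have "1 - y \<noteq> 0"
    using nq[of "Suc m - j"] qpoch_q_Suc_diff[OF \<open>j \<le> m\<close>] by (auto simp: y_def)
  have q_Suc_m: "q ^ Suc m = x * y"
    using \<open>j \<le> m\<close> by (simp add: x_def y_def flip: power_add)
  then have q_2_Suc_m: "q ^ (2 * Suc m) = x\<^sup>2 * y\<^sup>2"
    by (metis mult.commute power_mult power_mult_distrib)
  note T1 = beta17_term_Suc_k_shift[OF nq \<open>j \<le> m\<close>, where a = a and k = k, folded x_def y_def T_def]
  note T2 = beta17_term_Suc[OF nq \<open>j \<le> m\<close>, where a = a and k = k, folded y_def T_def]
  note G = beta17_telescoper_eq[OF nq \<open>j \<le> m\<close>, where a = a and k = k, folded x_def y_def T_def]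
  have "(1 - y) * ?lhs = (1 - k * x * y) * ((1 - y) * beta17_term a q (Suc m) j (k * q))
      - (1 - k * x\<^sup>2 * y\<^sup>2) * ((1 - y) * beta17_term a q (Suc m) j k) - (k / a) * (1 - y) * T"
    unfolding q_Suc_m q_2_Suc_m T_def by (simp add: algebra_simps)
  also have "\<dots> = (1 - k * x * y) * (x * (1 - k * y / a) * T) - (1 - k * x\<^sup>2 * y\<^sup>2) * ((1 - k / a) * T)
      - (k / a) * (1 - y) * T"
    unfolding T1 T2 ..
  also have "\<dots> = (1 - y) * (- (k * x * (x * y)) * T) - (1 - x) * (1 - k * y / a) * T"
    using \<open>a \<noteq> 0\<close> by (simp add: field_simps) (simp add: algebra_simps power2_eq_square)
  also have "\<dots> = (1 - y) * ?rhs"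
    unfolding beta17_telescoper_Suc[OF nq \<open>j \<le> m\<close>] right_diff_distrib G q_Suc_m
    by (simp add: x_def T_def)
  finally show ?thesis
    using \<open>1 - y \<noteq> 0\<close> by simp
qed

lemma beta17_term_top_k_shift:
  "(1 - k * q ^ n) * beta17_term a q n n (k * q) - (1 - k * q ^ (2 * n)) * beta17_term a q n n k
    = - beta17_telescoper a q n n k"
proof -
  define E where "E = (-1) ^ n * k ^ n * q ^ ((n choose 2) + n * n) / qpoch q q n"
  have "beta17_term a q n n (k * q) = E * q ^ n" "beta17_term a q n n k = E"
    "beta17_telescoper a q n n k = E * (1 - q ^ n)"
    by (simp_all add: beta17_term_def beta17_telescoper_def E_def power_mult_distrib)
  moreover have "q ^ (2 * n) = q ^ n * q ^ n"
    by (simp add: mult_2 power_add)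
  ultimately show ?thesis
    by (simp add: algebra_simps)
qed

lemma beta17_term_sum_k_shift:
  assumes "\<And>m. qpoch q q m \<noteq> 0" and "a \<noteq> 0"
  shows "(1 - k * q ^ Suc m) * (\<Sum>j\<le>Suc m. beta17_term a q (Suc m) j (k * q))
      - (1 - k * q ^ (2 * Suc m)) * (\<Sum>j\<le>Suc m. beta17_term a q (Suc m) j k)
      - (k / a) * (\<Sum>j\<le>m. beta17_term a q m j (k * q)) = 0"
proof -
  let ?c1 = "1 - k * q ^ Suc m" and ?c2 = "1 - k * q ^ (2 * Suc m)" and ?c3 = "k / a"
  let ?T1 = "\<lambda>j. beta17_term a q (Suc m) j (k * q)" and ?T2 = "\<lambda>j. beta17_term a q (Suc m) j k"
    and ?T3 = "\<lambda>j. beta17_term a q m j (k * q)"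
  let ?G = "\<lambda>j. beta17_telescoper a q (Suc m) j k"
  have "?c1 * (\<Sum>j\<le>Suc m. ?T1 j) - ?c2 * (\<Sum>j\<le>Suc m. ?T2 j) - ?c3 * (\<Sum>j\<le>m. ?T3 j)
      = (\<Sum>j<Suc m. ?c1 * ?T1 j - ?c2 * ?T2 j - ?c3 * ?T3 j) + (?c1 * ?T1 (Suc m) - ?c2 * ?T2 (Suc m))"
    by (simp only: sum.atMost_Suc lessThan_Suc_atMost sum_subtractf sum_distrib_left[symmetric])
      (simp add: algebra_simps)
  also have "(\<Sum>j<Suc m. ?c1 * ?T1 j - ?c2 * ?T2 j - ?c3 * ?T3 j) = (\<Sum>j<Suc m. ?G (Suc j) - ?G j)"
    by (intro sum.cong refl beta17_term_k_shift assms) simp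
  also have "\<dots> = ?G (Suc m) - ?G 0"
    by (rule sum_lessThan_telescope)
  also have "?G 0 = 0"
    by (simp add: beta17_telescoper_def)
  finally show ?thesis
    by (simp only: beta17_term_top_k_shift) simp
qed

lemma beta17_k_shift:
  assumes "\<And>m. qpoch q q m \<noteq> 0" and "a \<noteq> 0"
  shows "(1 - k) * beta17 a (k * q) q (Suc m)
    = (1 - k * q ^ (2 * Suc m)) * beta17 a k q (Suc m) + (1 - k) * (k / a) * beta17 a (k * q) q m"
proof -
  define S where "S n k = (\<Sum>j\<le>n. beta17_term a q n j k)" for n k
  have "(1 - k) * beta17 a (k * q) q (Suc m) = qpoch k q (Suc m) * ((1 - k * q ^ Suc m) * S (Suc m) (k * q))"
    using qpoch_Suc_shift'[of k q "Suc m"] by (simp add: beta17_eq_sum S_def)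
  also have "(1 - k * q ^ Suc m) * S (Suc m) (k * q)
      = (1 - k * q ^ (2 * Suc m)) * S (Suc m) k + (k / a) * S m (k * q)"
    using beta17_term_sum_k_shift[OF assms, of k m] unfolding S_def by (simp add: algebra_simps)
  also have "qpoch k q (Suc m) * \<dots>
      = (1 - k * q ^ (2 * Suc m)) * beta17 a k q (Suc m) + (1 - k) * (k / a) * beta17 a (k * q) q m"
    by (simp add: beta17_eq_sum S_def algebra_simps qpoch_Suc_shift[of k q m])
  finally show ?thesis .
qed

lemma wp_transform_at_a:
  assumes "a \<noteq> 0"
  shows "wp_transform a q \<alpha> n a = qpoch a q (n + n) / qpoch (a * q) q (n + n) * \<alpha> n"
proof -
  have "(\<Sum>j<n. wp_coeff a q n j a * \<alpha> j) = 0"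
    using assms by (intro sum.neutral) (simp add: wp_coeff_def qpoch_1_eq_0)
  then show ?thesis
    unfolding wp_transform_def lessThan_Suc_atMost[symmetric] sum.lessThan_Suc
    by (simp add: wp_coeff_def)
qed

lemma beta17_at_a:
  assumes "a \<noteq> 0"
  shows "beta17 a a q n = qpoch a q n * ((-1) ^ n * a ^ n * q ^ ((n choose 2) + n * n) / qpoch q q n)"
proof -
  have "(\<Sum>j<n. beta17_term a q n j a) = 0"
    using assms by (intro sum.neutral) (simp add: beta17_term_def qpoch_1_eq_0)
  then show ?thesis
    unfolding beta17_eq_sum lessThan_Suc_atMost[symmetric] sum.lessThan_Suc
    by (simp add: beta17_term_def)
qed

lemma pentagonal_exponent: "n * (3 * n - 1) div 2 = (n choose 2) + n * n"
proof -
  have "n * (3 * n - 1) = n * (n - 1) + 2 * (n * n)"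
    by (cases n) (simp_all add: algebra_simps)
  then show ?thesis
    by (simp add: choose_two)
qed

lemma wp_transform_alpha17_at_a:
  assumes "a \<noteq> 0" and "a \<noteq> 1" and "\<And>m. qpoch q q m \<noteq> 0" and "\<And>m. qpoch (a * q) q m \<noteq> 0"
  shows "wp_transform a q (alpha17 a k q) n a = beta17 a a q n"
proof -
  define X where "X = (-1) ^ n * a ^ n * q ^ ((n choose 2) + n * n)"
  define P Q where "P = qpoch a q (n + n)" and "Q = qpoch (a * q) q (n + n)"
  have PQ: "P * (1 - a * q ^ (n + n)) = (1 - a) * Q"
    unfolding P_def Q_def by (simp only: qpoch_Suc_shift' mult.commute)
  have "alpha17 a k q n = X * (1 - a * q ^ (n + n)) * qpoch a q n / ((1 - a) * qpoch q q n)"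
    unfolding alpha17_def X_def pentagonal_exponent mult_2 ..
  then have "wp_transform a q (alpha17 a k q) n a
      = (P * (1 - a * q ^ (n + n))) * X * qpoch a q n / (Q * (1 - a) * qpoch q q n)"
    using \<open>a \<noteq> 0\<close> by (simp add: wp_transform_at_a P_def Q_def mult_ac)
  also have "\<dots> = qpoch a q n * (X / qpoch q q n)"
    using assms(2) assms(4)[of "n + n"] by (simp add: PQ Q_def)
  finally show ?thesis
    using \<open>a \<noteq> 0\<close> by (simp add: beta17_at_a X_def)
qed

theorem mainTheorem17:
  fixes a k q :: complex
  assumes "a \<noteq> 0" and "a \<noteq> 1"
    and "\<And>m. qpoch q q m \<noteq> 0"
    and "\<And>m. qpoch (a * q) q m \<noteq> 0"
  shows "WP_Bailey_pair a k q (alpha17 a k q) (beta17 a k q)"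
proof -
  have "wp_transform a q (alpha17 a k q) n k' = beta17 a k' q n" for n k'
  proof (rule k_shift_recurrence_unique[where F = "wp_transform a q (alpha17 a k q)"
        and G = "\<lambda>n k. beta17 a k q n" and a = a and q = q])
    show "wp_transform a q (alpha17 a k q) 0 x = beta17 a x q 0" for x
      using assms(2) by (simp add: wp_transform_def wp_coeff_def alpha17_def beta17_def binomial_eq_0)
  qed (use assms power_Suc_ne_1_if_qpoch_nonzero[OF assms(3)]
      mult_power_ne_1_if_qpoch_nonzero[OF assms(4) assms(2)] in
      \<open>simp_all add: poly_function_wp_transform poly_function_beta17
        wp_transform_k_shift beta17_k_shift wp_transform_alpha17_at_a\<close>)
  moreover have "alpha17 a k q 0 = 1"
    using assms(2) by (simp add: alpha17_def)
  ultimately show ?thesis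
    by (simp add: WP_Bailey_pair_iff_wp_transform)
qed

end
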